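(* Let $G$ be a connected hypergraph, let $u\in V(G)$, and let $v,w$ be two neighbors of $u$ that are not adjacent to each other. Let $x=x(G)$. Then $x_w+x_u-x_v>0$.
   Context: A (simple) hypergraph has edges that are vertex subsets of size at least two; two vertices are adjacent (neighbors) if some edge contains both. A loose path is an alternating sequence $(v_0,e_1,v_1,\dots,e_p,v_p)$ of distinct vertices and distinct edges with $v_{i-1},v_i\in e_i$ and $e_i\cap e_j=\emptyset$ whenever $j>i+1$; $G$ is connected if any two vertices are joined by one, and $d_G(u,v)$ is the length of a shortest loose path from $u$ to $v$. $D(G)=(d_G(u,v))$ is the distance matrix, and $x(G)$ is the unique unit positive eigenvector of $D(G)$ for its largest eigenvalue (distance Perron vector). *)

theory Defs
  imports Complex_Main
begin

definition hypergraph :: "'a set \<Rightarrow> 'a set set \<Rightarrow> bool" where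
  "hypergraph V E \<longleftrightarrow> finite V \<and> (\<forall>e\<in>E. e \<subseteq> V \<and> card e \<ge> 2)"

definition hadj :: "'a set set \<Rightarrow> 'a \<Rightarrow> 'a \<Rightarrow> bool" where
  "hadj E u v \<longleftrightarrow> u \<noteq> v \<and> (\<exists>e\<in>E. u \<in> e \<and> v \<in> e)"

text \<open>Loose path (v_0,e_1,v_1,...,e_p,v_p): vertex list vs = [v_0..v_p],
  edge list es = [e_1..e_p].\<close>
definition loose_path :: "'a set \<Rightarrow> 'a set set \<Rightarrow> 'a list \<Rightarrow> 'a set list \<Rightarrow> bool" where
  "loose_path V E vs es \<longleftrightarrow>
     length vs = length es + 1 \<and> set vs \<subseteq> V \<and> set es \<subseteq> E \<and>
     distinct vs \<and> distinct es \<and>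
     (\<forall>i < length es. vs ! i \<in> es ! i \<and> vs ! (i+1) \<in> es ! i) \<and>
     (\<forall>i < length es. \<forall>j < length es. i + 1 < j \<longrightarrow> es ! i \<inter> es ! j = {})"

definition loose_path_between ::
  "'a set \<Rightarrow> 'a set set \<Rightarrow> 'a \<Rightarrow> 'a \<Rightarrow> nat \<Rightarrow> bool" where
  "loose_path_between V E u v p \<longleftrightarrow>
     (\<exists>vs es. loose_path V E vs es \<and> hd vs = u \<and> last vs = v \<and> length es = p)"

definition hconnected :: "'a set \<Rightarrow> 'a set set \<Rightarrow> bool" where
  "hconnected V E \<longleftrightarrow> (\<forall>u\<in>V. \<forall>v\<in>V. \<exists>p. loose_path_between V E u v p)"

definition hdist :: "'a set \<Rightarrow> 'a set set \<Rightarrow> 'a \<Rightarrow> 'a \<Rightarrow> nat" where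
  "hdist V E u v = (LEAST p. loose_path_between V E u v p)"

definition dist_matrix :: "'a set \<Rightarrow> 'a set set \<Rightarrow> 'a \<Rightarrow> 'a \<Rightarrow> real" where
  "dist_matrix V E u v = real (hdist V E u v)"

text \<open>mu is an eigenvalue of D(G) with (nonzero, real) eigenvector y on V.
  D(G) is real symmetric, so all eigenvalues are real and have real eigenvectors.\<close>
definition dist_eigenpair :: "'a set \<Rightarrow> 'a set set \<Rightarrow> real \<Rightarrow> ('a \<Rightarrow> real) \<Rightarrow> bool" where
  "dist_eigenpair V E \<mu> y \<longleftrightarrow>
     (\<exists>v\<in>V. y v \<noteq> 0) \<and>
     (\<forall>u\<in>V. (\<Sum>v\<in>V. dist_matrix V E u v * y v) = \<mu> * y u)"

definition dist_perron_vector :: "'a set \<Rightarrow> 'a set set \<Rightarrow> ('a \<Rightarrow> real) \<Rightarrow> bool" where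
  "dist_perron_vector V E x \<longleftrightarrow>
     (\<forall>v\<in>V. x v > 0) \<and> (\<Sum>v\<in>V. (x v)\<^sup>2) = 1 \<and>
     (\<exists>\<rho>. dist_eigenpair V E \<rho> x \<and> (\<forall>\<mu> y. dist_eigenpair V E \<mu> y \<longrightarrow> \<mu> \<le> \<rho>))"

end

theory Submission
  imports Defs
begin

(* Let rho be the eigenvalue of x and D = D(G). Then
   rho (x_w + x_u - x_v) = sum_z (D_wz + D_uz - D_vz) x_z,
   where the coefficient is at least 1 at z = v, at least -1 at z = w (as d(v,w) <= 2 through u),
   and nonnegative elsewhere (d(w,z) >= 1 and d(v,z) <= d(u,z) + 1). Hence
   rho (x_w + x_u - x_v) >= x_v - x_w, and since rho >= 0, x_w + x_u - x_v <= 0 would force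
   x_u <= x_v - x_w <= 0.
   The distance bounds are proved for walks (consecutive vertices share an edge, repetitions
   allowed): a shortest walk is a loose path, since a repeated vertex, a repeated edge or two
   intersecting non-consecutive edges would each yield a shortcut. *)

definition hwalk :: "'a set \<Rightarrow> 'a set set \<Rightarrow> 'a list \<Rightarrow> 'a set list \<Rightarrow> bool" where
  "hwalk V E vs es \<longleftrightarrow> length vs = length es + 1 \<and> set vs \<subseteq> V \<and> set es \<subseteq> E \<and>
     (\<forall>i < length es. vs ! i \<in> es ! i \<and> vs ! (i+1) \<in> es ! i)"

lemma hwalk_singleton_iff: "hwalk V E [a] [] \<longleftrightarrow> a \<in> V"
  by (simp add: hwalk_def)

lemma hwalk_Cons:
  assumes "hypergraph V E" "hwalk V E vs es" "e \<in> E" "a \<in> e" "hd vs \<in> e"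
  shows "hwalk V E (a # vs) (e # es)"
  using assms unfolding hwalk_def hypergraph_def
  by (cases vs) (auto simp: nth_Cons split: nat.split)

lemma loose_path_imp_hwalk: "loose_path V E vs es \<Longrightarrow> hwalk V E vs es"
  unfolding loose_path_def hwalk_def by auto

lemma hwalk_take:
  assumes "hwalk V E vs es" "i \<le> length es"
  shows "hwalk V E (take (Suc i) vs) (take i es)"
  using assms unfolding hwalk_def by (auto dest: in_set_takeD)

lemma hwalk_drop:
  assumes "hwalk V E vs es" "j \<le> length es"
  shows "hwalk V E (drop j vs) (drop j es)"
  using assms unfolding hwalk_def by (auto dest: in_set_dropD simp: add.commute add.left_commute)

lemma hwalk_append:
  assumes "hwalk V E vs es" "hwalk V E ws fs" "last vs = hd ws"
  shows "hwalk V E (butlast vs @ ws) (es @ fs)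
    \<and> hd (butlast vs @ ws) = hd vs \<and> last (butlast vs @ ws) = last ws"
proof -
  have len: "length vs = length es + 1" "length ws = length fs + 1"
    using assms unfolding hwalk_def by auto
  have steps: "(butlast vs @ ws) ! k \<in> (es @ fs) ! k \<and> (butlast vs @ ws) ! Suc k \<in> (es @ fs) ! k"
    if "k < length (es @ fs)" for k
  proof (cases "k < length es")
    case True
    moreover have "(butlast vs @ ws) ! Suc k = vs ! Suc k"
    proof -
      have "ws ! 0 = vs ! length es"
        using len assms(3) by (simp add: hd_conv_nth last_conv_nth flip: length_greater_0_conv)
      then show ?thesis
        using True len by (cases "Suc k = length es") (auto simp: nth_append nth_butlast)
    qed
    ultimately show ?thesis
      using assms(1) len by (auto simp: hwalk_def nth_append nth_butlast)
  next
    case False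
    then show ?thesis
      using assms(2) len that by (auto simp: hwalk_def nth_append Suc_diff_le)
  qed
  then have "hwalk V E (butlast vs @ ws) (es @ fs)"
    using assms len unfolding hwalk_def by (auto dest: in_set_butlastD)
  moreover have "hd (butlast vs @ ws) = hd vs"
    using len assms(3) by (cases vs rule: rev_cases) (auto simp: hd_append)
  moreover have "last (butlast vs @ ws) = last ws"
    using len by (cases ws) auto
  ultimately show ?thesis by blast
qed

lemma hwalk_replace_segment:
  assumes walk: "hwalk V E vs es" and ij: "i \<le> j" "j \<le> length es"
    and detour: "hwalk V E ws fs" "hd ws = vs ! i" "last ws = vs ! j"
  shows "\<exists>vs' es'. hwalk V E vs' es' \<and> hd vs' = hd vs \<and> last vs' = last vs
    \<and> length es' = length es - (j - i) + length fs"
proof -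
  have len: "length vs = length es + 1"
    using walk unfolding hwalk_def by simp
  have prefix: "hwalk V E (take (Suc i) vs) (take i es)" "last (take (Suc i) vs) = vs ! i"
    using hwalk_take[OF walk] ij len by (auto simp: take_Suc_conv_app_nth)
  have suffix: "hwalk V E (drop j vs) (drop j es)" "hd (drop j vs) = vs ! j"
      "last (drop j vs) = last vs"
    using hwalk_drop[OF walk] ij len by (auto simp: hd_drop_conv_nth last_drop)
  obtain us where us: "hwalk V E us (take i es @ fs)" "hd us = hd vs" "last us = vs ! j"
    using hwalk_append[OF prefix(1) detour(1)] prefix(2) detour(2,3) len by auto
  show ?thesis
    using hwalk_append[OF us(1) suffix(1)] us(2,3) suffix(2,3) ij len
    by (intro exI[of _ "butlast us @ drop j vs"] exI[of _ "take i es @ fs @ drop j es"]) auto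
qed

definition shortest_hwalk :: "'a set \<Rightarrow> 'a set set \<Rightarrow> 'a list \<Rightarrow> 'a set list \<Rightarrow> bool" where
  "shortest_hwalk V E vs es \<longleftrightarrow> hwalk V E vs es \<and>
     (\<forall>vs' es'. hwalk V E vs' es' \<and> hd vs' = hd vs \<and> last vs' = last vs
        \<longrightarrow> length es \<le> length es')"

lemma shortest_hwalk_no_shortcut:
  assumes shortest: "shortest_hwalk V E vs es" and ij: "i \<le> j" "j \<le> length es"
    and detour: "hwalk V E ws fs" "hd ws = vs ! i" "last ws = vs ! j"
  shows "j - i \<le> length fs"
proof -
  have "hwalk V E vs es"
    using shortest unfolding shortest_hwalk_def by blast
  from hwalk_replace_segment[OF this ij detour] shortest ij show ?thesis
    unfolding shortest_hwalk_def by fastforce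
qed

lemma shortest_hwalk_imp_loose_path:
  assumes hyp: "hypergraph V E" and shortest: "shortest_hwalk V E vs es"
  shows "loose_path V E vs es"
proof -
  note no_shortcut = shortest_hwalk_no_shortcut[OF shortest]
  have walk: "hwalk V E vs es"
    using shortest unfolding shortest_hwalk_def by blast
  have len: "length vs = length es + 1" and vs_V: "set vs \<subseteq> V" and es_E: "set es \<subseteq> E"
    and step: "\<And>k. k < length es \<Longrightarrow> vs ! k \<in> es ! k \<and> vs ! Suc k \<in> es ! k"
    using walk unfolding hwalk_def by auto
  have vertex: "vs ! k \<in> V" if "k \<le> length es" for k
    using vs_V len that by (simp add: subset_iff)
  have edge_walk: "hwalk V E (a # ws) (es ! k # fs)"
    if "k < length es" "a \<in> es ! k" "hwalk V E ws fs" "hd ws \<in> es ! k" for k a ws fs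
    using hwalk_Cons[OF hyp that(3)] that(1,2,4) es_E nth_mem by blast
  have "distinct vs"
  proof (rule ccontr)
    assume "\<not> distinct vs"
    then obtain i j where ij: "i < j" "j < length vs" "vs ! i = vs ! j"
      by (metis distinct_conv_nth linorder_neqE_nat)
    have "hwalk V E [vs ! i] []"
      using vertex ij len by (simp add: hwalk_singleton_iff)
    from no_shortcut[of i j, OF _ _ this] ij len show False by simp
  qed
  moreover have "distinct es"
  proof (rule ccontr)
    assume "\<not> distinct es"
    then obtain i j where ij: "i < j" "j < length es" "es ! i = es ! j"
      by (metis distinct_conv_nth linorder_neqE_nat)
    have "hwalk V E [vs ! i, vs ! Suc j] [es ! i]"
      using edge_walk[of i "vs ! i" "[vs ! Suc j]" "[]"] vertex ij step[of i] step[of j]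
      by (simp add: hwalk_singleton_iff)
    from no_shortcut[of i "Suc j", OF _ _ this] ij show False by simp
  qed
  moreover have "es ! i \<inter> es ! j = {}" if ij: "i + 1 < j" "j < length es" for i j
  proof (rule ccontr)
    assume "es ! i \<inter> es ! j \<noteq> {}"
    then obtain y where y: "y \<in> es ! i" "y \<in> es ! j" by blast
    have "hwalk V E [y, vs ! Suc j] [es ! j]"
      using edge_walk[of j y "[vs ! Suc j]" "[]"] vertex ij step y
      by (simp add: hwalk_singleton_iff)
    then have "hwalk V E [vs ! i, y, vs ! Suc j] [es ! i, es ! j]"
      using edge_walk[of i "vs ! i"] step y ij by auto
    from no_shortcut[of i "Suc j", OF _ _ this] ij show False by simp
  qed
  ultimately show ?thesis
    using len vs_V es_E step unfolding loose_path_def by auto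
qed

lemma hwalk_imp_loose_path_between:
  assumes hyp: "hypergraph V E" and walk: "hwalk V E vs es"
  shows "\<exists>p \<le> length es. loose_path_between V E (hd vs) (last vs) p"
proof -
  define walk_length where "walk_length n \<longleftrightarrow>
    (\<exists>vs' es'. hwalk V E vs' es' \<and> hd vs' = hd vs \<and> last vs' = last vs \<and> length es' = n)" for n
  have "walk_length (length es)"
    using walk unfolding walk_length_def by blast
  then have "walk_length (LEAST n. walk_length n)" and min_le: "(LEAST n. walk_length n) \<le> length es"
    by (auto intro: LeastI Least_le)
  then obtain vs' es' where walk': "hwalk V E vs' es'" "hd vs' = hd vs" "last vs' = last vs"
    and len': "length es' = (LEAST n. walk_length n)"
    unfolding walk_length_def by blast
  have "shortest_hwalk V E vs' es'"
    using walk' len' unfolding shortest_hwalk_def by (auto simp: walk_length_def intro: Least_le)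
  then have "loose_path V E vs' es'"
    by (rule shortest_hwalk_imp_loose_path[OF hyp])
  then show ?thesis
    using walk' len' min_le unfolding loose_path_between_def by metis
qed

lemma hdist_le_hwalk:
  assumes "hypergraph V E" "hwalk V E vs es"
  shows "hdist V E (hd vs) (last vs) \<le> length es"
  using hwalk_imp_loose_path_between[OF assms] unfolding hdist_def
  by (meson Least_le le_trans)

lemma loose_path_between_hdist:
  assumes "hconnected V E" "a \<in> V" "b \<in> V"
  shows "loose_path_between V E a b (hdist V E a b)"
  using assms unfolding hconnected_def hdist_def by (meson LeastI)

lemma hdist_refl: "a \<in> V \<Longrightarrow> hdist V E a a = 0"
  unfolding hdist_def loose_path_between_def loose_path_def
  by (rule Least_eq_0) (auto intro!: exI[of _ "[a]"])

lemma hdist_pos: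
  assumes "hconnected V E" "a \<in> V" "b \<in> V" "a \<noteq> b"
  shows "0 < hdist V E a b"
  using loose_path_between_hdist[OF assms(1-3)] assms(4)
  unfolding loose_path_between_def loose_path_def
  by (metis One_nat_def add_0 gr0I last_ConsL length_0_conv length_Suc_conv list.sel(1))

lemma hdist_adjacent_le:
  assumes hyp: "hypergraph V E" and conn: "hconnected V E"
    and "u \<in> V" "z \<in> V" "hadj E u v"
  shows "hdist V E v z \<le> hdist V E u z + 1"
proof -
  obtain vs es where path: "loose_path V E vs es" "hd vs = u" "last vs = z"
    "length es = hdist V E u z"
    using loose_path_between_hdist[OF conn assms(3,4)] unfolding loose_path_between_def by blast
  obtain e where e: "e \<in> E" "v \<in> e" "u \<in> e"
    using assms(5) unfolding hadj_def by blast
  have walk: "hwalk V E vs es"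
    using path(1) by (rule loose_path_imp_hwalk)
  then have "vs \<noteq> []"
    unfolding hwalk_def by auto
  with hdist_le_hwalk[OF hyp hwalk_Cons[OF hyp walk e(1,2)]] e(3) path(2-4) show ?thesis
    by simp
qed

lemma hdist_common_neighbour_le:
  assumes hyp: "hypergraph V E" and "w \<in> V" "hadj E u v" "hadj E u w"
  shows "hdist V E v w \<le> 2"
proof -
  obtain e f where "e \<in> E" "v \<in> e" "u \<in> e" "f \<in> E" "w \<in> f" "u \<in> f"
    using assms(3,4) unfolding hadj_def by blast
  then have "hwalk V E [v, u, w] [e, f]"
    using assms(2) by (intro hwalk_Cons[OF hyp]) (auto simp: hwalk_singleton_iff)
  from hdist_le_hwalk[OF hyp this] show ?thesis
    by simp
qed

lemma eigenvalue_nonneg_if_pos_eigenvector: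
  fixes D :: "'a \<Rightarrow> 'a \<Rightarrow> real"
  assumes "a \<in> V" "\<And>z. z \<in> V \<Longrightarrow> 0 \<le> D a z" "\<And>z. z \<in> V \<Longrightarrow> 0 < x z"
    and "(\<Sum>z\<in>V. D a z * x z) = \<rho> * x a"
  shows "0 \<le> \<rho>"
proof -
  have "0 \<le> (\<Sum>z\<in>V. D a z * x z)"
    using assms(2,3) by (intro sum_nonneg) (simp add: less_imp_le)
  then have "0 \<le> \<rho> * x a"
    using assms(4) by simp
  with assms(3)[OF assms(1)] show ?thesis
    by (simp add: zero_le_mult_iff)
qed

lemma eigenvector_row_combination_pos:
  fixes D :: "'a \<Rightarrow> 'a \<Rightarrow> real"
  assumes "finite V" "u \<in> V" "v \<in> V" "w \<in> V" "v \<noteq> w"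
    and pos: "\<And>z. z \<in> V \<Longrightarrow> 0 < x z" and "0 \<le> \<rho>"
    and eig: "\<And>a. a \<in> {u, v, w} \<Longrightarrow> (\<Sum>z\<in>V. D a z * x z) = \<rho> * x a"
    and coeff_v: "1 \<le> D w v + D u v - D v v"
    and coeff_w: "-1 \<le> D w w + D u w - D v w"
    and coeff_other: "\<And>z. z \<in> V - {v, w} \<Longrightarrow> 0 \<le> D w z + D u z - D v z"
  shows "0 < x w + x u - x v"
proof -
  define c where "c z = D w z + D u z - D v z" for z
  define g where "g z = (if z = v then x v else 0) - (if z = w then x w else 0)" for z
  have "x v - x w = (\<Sum>z\<in>V. g z)"
    using assms(1,3,4) by (simp add: g_def sum_subtractf)
  also have "\<dots> \<le> (\<Sum>z\<in>V. c z * x z)"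
  proof (rule sum_mono)
    fix z assume z: "z \<in> V"
    consider "z = v" | "z = w" | "z \<in> V - {v, w}"
      using z by blast
    then show "g z \<le> c z * x z"
    proof cases
      case 1
      then show ?thesis
        using mult_right_mono[OF coeff_v less_imp_le[OF pos[OF z]]] assms(5)
        by (simp add: g_def c_def)
    next
      case 2
      then show ?thesis
        using mult_right_mono[OF coeff_w less_imp_le[OF pos[OF z]]] assms(5)
        by (simp add: g_def c_def)
    next
      case 3
      then show ?thesis
        using coeff_other[OF 3] pos[OF z] by (simp add: g_def c_def)
    qed
  qed
  also have "\<dots> = \<rho> * (x w + x u - x v)"
    using eig[of u] eig[of v] eig[of w]
    by (simp add: c_def algebra_simps sum.distrib sum_subtractf)
  finally have key: "x v - x w \<le> \<rho> * (x w + x u - x v)" .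
  show ?thesis
  proof (rule ccontr)
    assume "\<not> ?thesis"
    then have "\<rho> * (x w + x u - x v) \<le> 0"
      using \<open>0 \<le> \<rho>\<close> by (simp add: mult_nonneg_nonpos)
    with key \<open>\<not> ?thesis\<close> pos[OF assms(2)] show False
      by linarith
  qed
qed

lemma dist_perron_vector_eigen:
  assumes "dist_perron_vector V E x" "u \<in> V"
  obtains \<rho> where "0 \<le> \<rho>" "\<And>a. a \<in> V \<Longrightarrow> (\<Sum>z\<in>V. dist_matrix V E a z * x z) = \<rho> * x a"
proof -
  have pos: "\<And>z. z \<in> V \<Longrightarrow> 0 < x z"
    using assms(1) unfolding dist_perron_vector_def by blast
  obtain \<rho> where eig: "\<And>a. a \<in> V \<Longrightarrow> (\<Sum>z\<in>V. dist_matrix V E a z * x z) = \<rho> * x a"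
    using assms(1) unfolding dist_perron_vector_def dist_eigenpair_def by blast
  have "0 \<le> \<rho>"
    by (rule eigenvalue_nonneg_if_pos_eigenvector[where D = "dist_matrix V E",
          OF assms(2) _ pos eig[OF assms(2)]])
      (simp add: dist_matrix_def)
  with eig show ?thesis
    using that by blast
qed

lemma dist_matrix_combination_coeffs:
  assumes hyp: "hypergraph V E" and conn: "hconnected V E"
    and "u \<in> V" "v \<in> V" "w \<in> V" "v \<noteq> w" "hadj E u v" "hadj E u w"
  defines "D \<equiv> dist_matrix V E"
  shows "1 \<le> D w v + D u v - D v v"
    and "-1 \<le> D w w + D u w - D v w"
    and "\<And>z. z \<in> V - {v, w} \<Longrightarrow> 0 \<le> D w z + D u z - D v z"
proof -
  show "1 \<le> D w v + D u v - D v v"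
    using hdist_pos[OF conn assms(5,4)] hdist_refl[OF assms(4)] assms(6)
    by (simp add: D_def dist_matrix_def)
  have "u \<noteq> w"
    using assms(8) unfolding hadj_def by blast
  then show "-1 \<le> D w w + D u w - D v w"
    using hdist_pos[OF conn assms(3,5)] hdist_refl[OF assms(5)]
      hdist_common_neighbour_le[OF hyp assms(5,7,8)]
    by (simp add: D_def dist_matrix_def)
  fix z assume "z \<in> V - {v, w}"
  then have z: "z \<in> V" "w \<noteq> z"
    by auto
  have "hdist V E v z \<le> hdist V E w z + hdist V E u z"
    using hdist_pos[OF conn assms(5) z] hdist_adjacent_le[OF hyp conn assms(3) z(1) assms(7)]
    by linarith
  then show "0 \<le> D w z + D u z - D v z"
    by (simp add: D_def dist_matrix_def)
qed

theorem lemma4p3: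
  fixes V :: "'a set" and E :: "'a set set" and x :: "'a \<Rightarrow> real"
  assumes "hypergraph V E" and "hconnected V E"
    and "u \<in> V" and "v \<in> V" and "w \<in> V" and "v \<noteq> w"
    and "hadj E u v" and "hadj E u w" and "\<not> hadj E v w"
    and "dist_perron_vector V E x"
  shows "x w + x u - x v > 0"
proof -
  have fin: "finite V"
    using assms(1) unfolding hypergraph_def by blast
  have pos: "\<And>z. z \<in> V \<Longrightarrow> 0 < x z"
    using assms(10) unfolding dist_perron_vector_def by blast
  obtain \<rho> where "0 \<le> \<rho>"
    and eig: "\<And>a. a \<in> V \<Longrightarrow> (\<Sum>z\<in>V. dist_matrix V E a z * x z) = \<rho> * x a"
    using dist_perron_vector_eigen[OF assms(10,3)] by blast
  have "\<And>a. a \<in> {u, v, w} \<Longrightarrow> (\<Sum>z\<in>V. dist_matrix V E a z * x z) = \<rho> * x a"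
    using eig assms(3-5) by blast
  from eigenvector_row_combination_pos[OF fin assms(3-6) pos \<open>0 \<le> \<rho>\<close> this
      dist_matrix_combination_coeffs[OF assms(1-8)]]
  show ?thesis
    by simp
qed

end
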